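(* Let $n\in\mathbb{Z}$ with $|n|\geq1$, $\alpha>0$, $R>0$ and $\kappa<\alpha^{-1}-\frac{r_0^2+n^2}{2R^2}$. If $$\left(\frac{6\,(1+n^2(2\ln2-1))}{\alpha^{-1}-\kappa}\right)^{1/2}<R,$$ then the Nehari manifold $\mathcal{M}$ is nonempty.
   Context: $r_0\approx2.404825$ is the first positive zero of the Bessel function $J_0$. $H$ is the completion of $\{u\in C^1[0,R]: u(0)=0=u(R)\}$ with respect to the inner product $(u,\tilde u)=\int_0^R\{ru_r\tilde u_r+\frac1r u\tilde u\}dr$. $\gamma_\kappa(u)=\frac12\int_0^R\{ru_r^2+\frac{n^2}{r}u^2-2(\alpha^{-1}-\kappa)ru^2+2\alpha^{-1}\frac{ru^2}{1+\alpha u^2}\}dr$ and $\mathcal{M}=\{u\in H\setminus\{0\}:\gamma_\kappa(u)=0\}$. *)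

theory Defs
  imports "HOL-Analysis.Analysis"
begin

definition besselJ0 :: "real \<Rightarrow> real" where
  "besselJ0 x = (\<Sum>k. (-1)^k * (x/2)^(2*k) / (fact k)^2)"

definition bessel_r0 :: real where
  "bessel_r0 = Inf {x. 0 < x \<and> besselJ0 x = 0}"

definition C1_0 :: "real \<Rightarrow> (real \<Rightarrow> real) \<Rightarrow> (real \<Rightarrow> real) \<Rightarrow> bool" where
  "C1_0 R \<phi> \<phi>' \<longleftrightarrow>
     (\<forall>x\<in>{0..R}. (\<phi> has_real_derivative \<phi>' x) (at x within {0..R})) \<and>
     continuous_on {0..R} \<phi>' \<and> \<phi> 0 = 0 \<and> \<phi> R = 0"

definition Hnorm2 :: "real \<Rightarrow> (real \<Rightarrow> real) \<Rightarrow> (real \<Rightarrow> real) \<Rightarrow> real" where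
  "Hnorm2 R u u' = (LINT r:{0<..<R}|lborel. r * (u' r)^2 + (u r)^2 / r)"

text \<open>Elements of H: the completion of C1_0 w.r.t. the H-inner product, realised
  concretely as functions u that are absolutely continuous on compact subintervals of (0,R]
  with derivative u', finite H-norm, and which are H-norm limits of C1_0 functions.\<close>
definition in_H :: "real \<Rightarrow> (real \<Rightarrow> real) \<Rightarrow> (real \<Rightarrow> real) \<Rightarrow> bool" where
  "in_H R u u' \<longleftrightarrow>
     (\<forall>s t. 0 < s \<and> s \<le> t \<and> t \<le> R \<longrightarrow>
        set_integrable lborel {s..t} u' \<and> u t - u s = (LINT x:{s..t}|lborel. u' x)) \<and>
     set_integrable lborel {0<..<R} (\<lambda>r. r * (u' r)^2) \<and>
     set_integrable lborel {0<..<R} (\<lambda>r. (u r)^2 / r) \<and>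
     (\<exists>\<phi> \<phi>'. (\<forall>k. C1_0 R (\<phi> k) (\<phi>' k)) \<and>
        (\<lambda>k. Hnorm2 R (\<lambda>r. \<phi> k r - u r) (\<lambda>r. \<phi>' k r - u' r)) \<longlonglongrightarrow> 0)"

definition gamma_kappa :: "real \<Rightarrow> real \<Rightarrow> int \<Rightarrow> real \<Rightarrow> (real \<Rightarrow> real) \<Rightarrow> (real \<Rightarrow> real) \<Rightarrow> real" where
  "gamma_kappa \<kappa> \<alpha> n R u u' = 1/2 * (LINT r:{0<..<R}|lborel.
      r * (u' r)^2 + (real_of_int n)^2 / r * (u r)^2
      - 2 * (1/\<alpha> - \<kappa>) * r * (u r)^2
      + 2 * (1/\<alpha>) * (r * (u r)^2 / (1 + \<alpha> * (u r)^2)))"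

definition nehari :: "real \<Rightarrow> real \<Rightarrow> int \<Rightarrow> real \<Rightarrow> ((real \<Rightarrow> real) \<times> (real \<Rightarrow> real)) set" where
  "nehari \<kappa> \<alpha> n R = {(u, u'). in_H R u u' \<and> Hnorm2 R u u' \<noteq> 0 \<and> gamma_kappa \<kappa> \<alpha> n R u u' = 0}"

end

theory Submission
  imports Defs
begin

text \<open>Test \<open>\<gamma>\<^sub>\<kappa>\<close> on the ray \<open>t \<phi>\<close> through the compactly supported bump
  \<open>\<phi>(r) = (r/\<rho>)\<^sup>2 (1 - r/\<rho>)\<^sub>+\<^sup>2\<close>. Its integrals are explicit:
  \<open>\<integral> r \<phi>'\<^sup>2 = 1/105\<close>, \<open>\<integral> \<phi>\<^sup>2/r = 1/280\<close>, \<open>\<integral> r \<phi>\<^sup>2 = \<rho>\<^sup>2/1260\<close>, so with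
  \<open>c = 1/\<alpha> - \<kappa>\<close> and \<open>a = \<rho>\<^sup>2/1260\<close>
  \<open>2\<gamma>\<^sub>\<kappa>(t\<phi>) = t\<^sup>2 (1/105 + n\<^sup>2/280 - 2ca) + (2/\<alpha>) \<integral> r (t\<phi>)\<^sup>2 / (1 + \<alpha> (t\<phi>)\<^sup>2)\<close>.
  The saturated last term is bounded, and behaves like \<open>2at\<^sup>2/\<alpha>\<close> near \<open>t = 0\<close>. Hence \<open>\<gamma>\<^sub>\<kappa>(t\<phi>)\<close>
  is positive for small \<open>t\<close> and negative for large \<open>t\<close> provided
  \<open>2ca > 1/105 + n\<^sup>2/280 > -2\<kappa>a\<close>. Since \<open>ln 2 \<ge> 11/16\<close>, the size condition on \<open>R\<close> gives the
  first inequality for \<open>\<rho> = R\<close>; shrinking \<open>\<rho>\<close> if \<open>\<kappa> < 0\<close> secures the second, as \<open>c + \<kappa> = 1/\<alpha> > 0\<close>.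
  The intermediate value theorem then yields a point of the Nehari manifold on the ray.\<close>

lemma set_integral_Ioo_eq_integral:
  fixes f :: "real \<Rightarrow> real"
  assumes "continuous_on {a..b} f"
  shows "(LINT r:{a<..<b}|lborel. f r) = integral {a..b} f"
proof -
  have "set_integrable lborel {a<..<b} f"
    by (rule set_integrable_subset[OF borel_integrable_atLeastAtMost'[OF assms]]) auto
  then show ?thesis
    by (simp add: set_borel_integral_eq_integral integral_open_interval_real)
qed

lemma C1_0_scale: "C1_0 R \<phi> \<phi>' \<Longrightarrow> C1_0 R (\<lambda>r. t * \<phi> r) (\<lambda>r. t * \<phi>' r)"
  unfolding C1_0_def by (auto intro!: DERIV_cmult continuous_intros)

lemma Hnorm2_scale: "Hnorm2 R (\<lambda>r. t * \<phi> r) (\<lambda>r. t * \<phi>' r) = t^2 * Hnorm2 R \<phi> \<phi>'"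
proof -
  have "Hnorm2 R (\<lambda>r. t * \<phi> r) (\<lambda>r. t * \<phi>' r)
      = (LINT r:{0<..<R}|lborel. t^2 * (r * (\<phi>' r)^2 + (\<phi> r)^2 / r))"
    unfolding Hnorm2_def
    by (intro set_lebesgue_integral_cong) (auto simp: power_mult_distrib algebra_simps)
  then show ?thesis by (simp add: Hnorm2_def)
qed

lemma in_H_of_C1_0:
  assumes C1: "C1_0 R \<phi> \<phi>'" and hardy: "set_integrable lborel {0<..<R} (\<lambda>r. (\<phi> r)^2 / r)"
  shows "in_H R \<phi> \<phi>'"
  unfolding in_H_def
proof (intro conjI allI impI)
  have deriv: "\<And>x. x \<in> {0..R} \<Longrightarrow> (\<phi> has_real_derivative \<phi>' x) (at x within {0..R})"
    and cont: "continuous_on {0..R} \<phi>'"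
    using C1 by (auto simp: C1_0_def)
  fix s t :: real assume st: "0 < s \<and> s \<le> t \<and> t \<le> R"
  then have sub: "{s..t} \<subseteq> {0..R}" by auto
  show "set_integrable lborel {s..t} \<phi>'"
    by (rule borel_integrable_atLeastAtMost'[OF continuous_on_subset[OF cont sub]])
  have "(LINT x:{s..t}|lborel. \<phi>' x) = \<phi> t - \<phi> s"
    unfolding set_lebesgue_integral_def
  proof (rule integral_FTC_atLeastAtMost)
    fix x assume "s \<le> x" "x \<le> t"
    with sub have "(\<phi> has_real_derivative \<phi>' x) (at x within {s..t})"
      by (intro has_field_derivative_subset[OF deriv]) auto
    then show "(\<phi> has_vector_derivative \<phi>' x) (at x within {s..t})"
      by (simp add: has_real_derivative_iff_has_vector_derivative)
  qed (use st continuous_on_subset[OF cont sub] in auto)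
  then show "\<phi> t - \<phi> s = (LINT x:{s..t}|lborel. \<phi>' x)" by simp
next
  have "continuous_on {0..R} (\<lambda>r. r * (\<phi>' r)^2)"
    using C1 by (auto simp: C1_0_def intro!: continuous_intros)
  then show "set_integrable lborel {0<..<R} (\<lambda>r. r * (\<phi>' r)^2)"
    by (rule set_integrable_subset[OF borel_integrable_atLeastAtMost']) auto
next
  show "set_integrable lborel {0<..<R} (\<lambda>r. (\<phi> r)^2 / r)" by (rule hardy)
next
  show "\<exists>\<psi> \<psi>'. (\<forall>k. C1_0 R (\<psi> k) (\<psi>' k)) \<and>
      (\<lambda>k. Hnorm2 R (\<lambda>r. \<psi> k r - \<phi> r) (\<lambda>r. \<psi>' k r - \<phi>' r)) \<longlonglongrightarrow> 0"
    by (rule exI[of _ "\<lambda>_. \<phi>"], rule exI[of _ "\<lambda>_. \<phi>'"]) (simp add: C1 Hnorm2_def)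
qed

lemma nehari_nonempty_of_sign_change:
  fixes t\<^sub>1 t\<^sub>2 :: real
  assumes C1: "C1_0 R \<phi> \<phi>'" and hardy: "set_integrable lborel {0<..<R} (\<lambda>r. (\<phi> r)^2 / r)"
    and nonzero: "Hnorm2 R \<phi> \<phi>' \<noteq> 0"
    and cont: "continuous_on {t\<^sub>1..t\<^sub>2} (\<lambda>t. gamma_kappa \<kappa> \<alpha> n R (\<lambda>r. t * \<phi> r) (\<lambda>r. t * \<phi>' r))"
    and "0 < t\<^sub>1" "t\<^sub>1 \<le> t\<^sub>2"
    and pos: "gamma_kappa \<kappa> \<alpha> n R (\<lambda>r. t\<^sub>1 * \<phi> r) (\<lambda>r. t\<^sub>1 * \<phi>' r) > 0"
    and neg: "gamma_kappa \<kappa> \<alpha> n R (\<lambda>r. t\<^sub>2 * \<phi> r) (\<lambda>r. t\<^sub>2 * \<phi>' r) < 0"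
  shows "nehari \<kappa> \<alpha> n R \<noteq> {}"
proof -
  obtain t where t: "t\<^sub>1 \<le> t" "t \<le> t\<^sub>2"
    and zero: "gamma_kappa \<kappa> \<alpha> n R (\<lambda>r. t * \<phi> r) (\<lambda>r. t * \<phi>' r) = 0"
    using IVT2'[of _ _ 0, OF _ _ \<open>t\<^sub>1 \<le> t\<^sub>2\<close> cont] pos neg by force
  have "set_integrable lborel {0<..<R} (\<lambda>r. (t * \<phi> r)^2 / r)"
    using set_integrable_mult_right[OF hardy, of "t^2"]
    by (simp add: power_mult_distrib mult.assoc)
  then have "in_H R (\<lambda>r. t * \<phi> r) (\<lambda>r. t * \<phi>' r)"
    by (intro in_H_of_C1_0 C1_0_scale C1)
  moreover have "Hnorm2 R (\<lambda>r. t * \<phi> r) (\<lambda>r. t * \<phi>' r) \<noteq> 0"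
    using nonzero t \<open>0 < t\<^sub>1\<close> by (simp add: Hnorm2_scale)
  ultimately have "((\<lambda>r. t * \<phi> r), (\<lambda>r. t * \<phi>' r)) \<in> nehari \<kappa> \<alpha> n R"
    using zero by (simp add: nehari_def)
  then show ?thesis by blast
qed

definition pos_sq :: "real \<Rightarrow> real" where
  "pos_sq x = (max 0 x)^2"

lemma pos_sq_has_real_derivative: "(pos_sq has_real_derivative 2 * max 0 x) (at x)"
proof (cases x "0::real" rule: linorder_cases)
  case less
  have "((\<lambda>_. 0) has_real_derivative 0) (at x)"
    by simp
  then have "(pos_sq has_real_derivative 0) (at x)"
    by (rule has_field_derivative_transform_within_open[of _ _ _ "{..<0}"])
       (use less in \<open>auto simp: pos_sq_def\<close>)
  then show ?thesis using less by simp
next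
  case equal
  have "((\<lambda>y. max 0 y) \<longlongrightarrow> max 0 0) (at (0::real))"
    by (intro tendsto_intros)
  moreover have "\<forall>\<^sub>F y in at (0::real). max 0 y = (pos_sq y - pos_sq 0) / (y - 0)"
    by (auto simp: eventually_at_filter pos_sq_def power2_eq_square max_def)
  ultimately have "((\<lambda>y. (pos_sq y - pos_sq 0) / (y - 0)) \<longlongrightarrow> 0) (at 0)"
    by (auto intro: Lim_transform_eventually)
  then show ?thesis using equal by (simp add: has_field_derivative_iff)
next
  case greater
  have "((\<lambda>y. y^2) has_real_derivative 2 * x) (at x)"
    by (auto intro!: derivative_eq_intros)
  then have "(pos_sq has_real_derivative 2 * x) (at x)"
    by (rule has_field_derivative_transform_within_open[of _ _ _ "{0<..}"])
       (use greater in \<open>auto simp: pos_sq_def\<close>)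
  then show ?thesis using greater by simp
qed

lemma pos_sq_has_real_derivative_chain [derivative_intros]:
  "(f has_real_derivative f') (at x within S) \<Longrightarrow>
   ((\<lambda>x. pos_sq (f x)) has_real_derivative 2 * max 0 (f x) * f') (at x within S)"
  using DERIV_chain2[OF pos_sq_has_real_derivative] by blast

lemma continuous_on_pos_sq [continuous_intros]:
  "continuous_on S f \<Longrightarrow> continuous_on S (\<lambda>x. pos_sq (f x))"
  unfolding pos_sq_def by (intro continuous_intros)

definition bump :: "real \<Rightarrow> real \<Rightarrow> real" where
  "bump \<rho> r = (r/\<rho>)^2 * pos_sq (1 - r/\<rho>)"

definition bump_deriv :: "real \<Rightarrow> real \<Rightarrow> real" where
  "bump_deriv \<rho> r = (2 * (r/\<rho>) * pos_sq (1 - r/\<rho>) - 2 * (r/\<rho>)^2 * max 0 (1 - r/\<rho>)) / \<rho>"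

text \<open>\<open>bump_sq_div \<rho>\<close> is the continuous extension of \<open>\<lambda>r. bump \<rho> r\<^sup>2 / r\<close> to \<open>r = 0\<close>.\<close>

definition bump_sq_div :: "real \<Rightarrow> real \<Rightarrow> real" where
  "bump_sq_div \<rho> r = (r/\<rho>)^3 * (pos_sq (1 - r/\<rho>))^2 / \<rho>"

lemma bump_has_real_derivative:
  "\<rho> > 0 \<Longrightarrow> (bump \<rho> has_real_derivative bump_deriv \<rho> r) (at r within S)"
  unfolding bump_def bump_deriv_def
  by (auto intro!: derivative_eq_intros simp: field_simps power2_eq_square)

lemma continuous_on_bump [continuous_intros]:
  "\<rho> > 0 \<Longrightarrow> continuous_on S f \<Longrightarrow> continuous_on S (\<lambda>x. bump \<rho> (f x))"
  unfolding bump_def by (auto intro!: continuous_intros)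

lemma continuous_on_bump_deriv [continuous_intros]:
  "\<rho> > 0 \<Longrightarrow> continuous_on S f \<Longrightarrow> continuous_on S (\<lambda>x. bump_deriv \<rho> (f x))"
  unfolding bump_deriv_def by (auto intro!: continuous_intros)

lemma continuous_on_bump_sq_div [continuous_intros]:
  "\<rho> > 0 \<Longrightarrow> continuous_on S f \<Longrightarrow> continuous_on S (\<lambda>x. bump_sq_div \<rho> (f x))"
  unfolding bump_sq_div_def by (auto intro!: continuous_intros)

lemma bump_sq_div_eq: "\<rho> > 0 \<Longrightarrow> r > 0 \<Longrightarrow> (bump \<rho> r)^2 / r = bump_sq_div \<rho> r"
  unfolding bump_def bump_sq_div_def by (simp add: field_simps power2_eq_square power3_eq_cube)

lemma bump_eq_0:
  assumes "\<rho> > 0" "\<rho> \<le> r"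
  shows "bump \<rho> r = 0" "bump_deriv \<rho> r = 0" "bump_sq_div \<rho> r = 0"
proof -
  have "max 0 (1 - r/\<rho>) = 0" using assms by (simp add: field_simps)
  then show "bump \<rho> r = 0" "bump_deriv \<rho> r = 0" "bump_sq_div \<rho> r = 0"
    unfolding bump_def bump_deriv_def bump_sq_div_def pos_sq_def by simp_all
qed

lemma bump_bounds:
  assumes "\<rho> > 0" "0 \<le> r"
  shows "0 \<le> bump \<rho> r" "bump \<rho> r \<le> 1"
proof -
  have "0 \<le> bump \<rho> r \<and> bump \<rho> r \<le> 1"
  proof (cases "r \<le> \<rho>")
    case True
    define s where "s = r/\<rho>"
    have s: "0 \<le> s" "s \<le> 1" using assms True by (auto simp: s_def field_simps)
    then have "bump \<rho> r = (s * (1 - s))^2"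
      by (simp add: bump_def pos_sq_def s_def[symmetric] power_mult_distrib)
    moreover have "0 \<le> s * (1 - s)" "s * (1 - s) \<le> 1" using s by (auto simp: mult_le_one)
    ultimately show ?thesis by (simp add: power_le_one)
  next
    case False
    then show ?thesis using bump_eq_0[OF assms(1)] by simp
  qed
  then show "0 \<le> bump \<rho> r" "bump \<rho> r \<le> 1" by auto
qed

lemma has_integral_rescaled:
  assumes "0 < \<rho>" "\<rho> \<le> R" and P: "\<And>s. (P has_real_derivative p s) (at s)"
    and inside: "\<And>r. 0 \<le> r \<Longrightarrow> r \<le> \<rho> \<Longrightarrow> f r = p (r/\<rho>) / \<rho>"
    and outside: "\<And>r. \<rho> \<le> r \<Longrightarrow> f r = 0"
  shows "(f has_integral (P 1 - P 0)) {0..R}"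
proof -
  have "((\<lambda>r. P (r/\<rho>)) has_real_derivative p (r/\<rho>) / \<rho>) (at r within {0..\<rho>})" for r
  proof -
    have "((\<lambda>r. r/\<rho>) has_real_derivative 1/\<rho>) (at r within {0..\<rho>})"
      using \<open>0 < \<rho>\<close> by (auto intro!: derivative_eq_intros)
    from DERIV_chain2[OF P this] show ?thesis using \<open>0 < \<rho>\<close> by simp
  qed
  then have "((\<lambda>r. p (r/\<rho>) / \<rho>) has_integral (P (\<rho>/\<rho>) - P (0/\<rho>))) {0..\<rho>}"
    by (intro fundamental_theorem_of_calculus)
       (use \<open>0 < \<rho>\<close> in \<open>auto simp: has_real_derivative_iff_has_vector_derivative[symmetric]\<close>)
  then have "(f has_integral (P 1 - P 0)) {0..\<rho>}"
    using \<open>0 < \<rho>\<close> by (auto intro: has_integral_eq simp: inside)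
  moreover have "(f has_integral 0) {\<rho>..R}"
    by (rule has_integral_is_0) (simp add: outside)
  ultimately show ?thesis
    using has_integral_combine[of 0 \<rho> R f] assms(1,2) by fastforce
qed

lemma has_integral_bump_deriv_sq:
  assumes "0 < \<rho>" "\<rho> \<le> R"
  shows "((\<lambda>r. r * (bump_deriv \<rho> r)^2) has_integral 1/105) {0..R}"
proof -
  let ?P = "\<lambda>s::real. s^4 - 24/5 * s^5 + 26/3 * s^6 - 48/7 * s^7 + 2 * s^8"
  let ?p = "\<lambda>s::real. s * (2 * s * (1 - s)^2 - 2 * s^2 * (1 - s))^2"
  have "(?P has_real_derivative ?p s) (at s)" for s
    by (rule derivative_eq_intros refl)+
       (simp add: algebra_simps power2_eq_square power3_eq_cube eval_nat_numeral)
  then have "((\<lambda>r. r * (bump_deriv \<rho> r)^2) has_integral (?P 1 - ?P 0)) {0..R}"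
  proof (rule has_integral_rescaled[OF assms])
    fix r assume "0 \<le> r" "r \<le> \<rho>"
    then have m: "max 0 (1 - r/\<rho>) = 1 - r/\<rho>" using assms(1) by (auto simp: field_simps)
    show "r * (bump_deriv \<rho> r)^2 = ?p (r/\<rho>) / \<rho>"
      unfolding bump_deriv_def pos_sq_def m using assms(1)
      by (simp add: field_simps) (simp add: power_numeral_reduce)
  qed (use bump_eq_0 assms in auto)
  then show ?thesis by simp
qed

lemma has_integral_bump_sq_div:
  assumes "0 < \<rho>" "\<rho> \<le> R"
  shows "(bump_sq_div \<rho> has_integral 1/280) {0..R}"
proof -
  let ?P = "\<lambda>s::real. 1/4 * s^4 - 4/5 * s^5 + s^6 - 4/7 * s^7 + 1/8 * s^8"
  let ?p = "\<lambda>s::real. s^3 * (1 - s)^4"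
  have "(?P has_real_derivative ?p s) (at s)" for s
    by (rule derivative_eq_intros refl)+
       (simp add: algebra_simps power2_eq_square power3_eq_cube eval_nat_numeral)
  then have "(bump_sq_div \<rho> has_integral (?P 1 - ?P 0)) {0..R}"
  proof (rule has_integral_rescaled[OF assms])
    fix r assume "0 \<le> r" "r \<le> \<rho>"
    then have m: "max 0 (1 - r/\<rho>) = 1 - r/\<rho>" using assms(1) by (auto simp: field_simps)
    show "bump_sq_div \<rho> r = ?p (r/\<rho>) / \<rho>"
      unfolding bump_sq_div_def pos_sq_def m by simp
  qed (use bump_eq_0 assms in auto)
  then show ?thesis by simp
qed

lemma has_integral_bump_sq:
  assumes "0 < \<rho>" "\<rho> \<le> R"
  shows "((\<lambda>r. r * (bump \<rho> r)^2) has_integral \<rho>^2/1260) {0..R}"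
proof -
  let ?P = "\<lambda>s::real. \<rho>^2 * (1/6 * s^6 - 4/7 * s^7 + 3/4 * s^8 - 4/9 * s^9 + 1/10 * s^10)"
  let ?p = "\<lambda>s::real. \<rho>^2 * (s^5 * (1 - s)^4)"
  have "(?P has_real_derivative ?p s) (at s)" for s
    by (rule derivative_eq_intros refl)+
       (simp add: algebra_simps power2_eq_square power3_eq_cube eval_nat_numeral)
  then have "((\<lambda>r. r * (bump \<rho> r)^2) has_integral (?P 1 - ?P 0)) {0..R}"
  proof (rule has_integral_rescaled[OF assms])
    fix r assume "0 \<le> r" "r \<le> \<rho>"
    then have m: "max 0 (1 - r/\<rho>) = 1 - r/\<rho>" using assms(1) by (auto simp: field_simps)
    show "r * (bump \<rho> r)^2 = ?p (r/\<rho>) / \<rho>"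
      unfolding bump_def pos_sq_def m using assms(1)
      by (simp add: field_simps power_numeral_reduce power2_eq_square)
  qed (use bump_eq_0 assms in auto)
  then show ?thesis by simp
qed

lemma C1_0_bump: "0 < \<rho> \<Longrightarrow> \<rho> \<le> R \<Longrightarrow> C1_0 R (bump \<rho>) (bump_deriv \<rho>)"
  unfolding C1_0_def
  using bump_has_real_derivative bump_eq_0(1)[of \<rho> R]
  by (auto intro!: continuous_intros simp: bump_def pos_sq_def)

lemma set_integrable_bump_sq_div:
  assumes "0 < \<rho>"
  shows "set_integrable lborel {0<..<R} (\<lambda>r. (bump \<rho> r)^2 / r)"
proof -
  have "set_integrable lborel {0<..<R} (bump_sq_div \<rho>)"
    by (rule set_integrable_subset[OF borel_integrable_atLeastAtMost'[of 0 R]])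
       (auto intro!: continuous_intros assms)
  moreover have "set_integrable lborel {0<..<R} (bump_sq_div \<rho>) =
      set_integrable lborel {0<..<R} (\<lambda>r. (bump \<rho> r)^2 / r)"
    by (rule set_integrable_cong) (auto simp: bump_sq_div_eq[OF assms])
  ultimately show ?thesis by simp
qed

lemma Hnorm2_bump:
  assumes "0 < \<rho>" "\<rho> \<le> R"
  shows "Hnorm2 R (bump \<rho>) (bump_deriv \<rho>) = 1/105 + 1/280"
proof -
  have "Hnorm2 R (bump \<rho>) (bump_deriv \<rho>) = (LINT r:{0<..<R}|lborel. r * (bump_deriv \<rho> r)^2 + bump_sq_div \<rho> r)"
    unfolding Hnorm2_def
    by (intro set_lebesgue_integral_cong) (auto simp: bump_sq_div_eq[OF assms(1)])
  also have "\<dots> = integral {0..R} (\<lambda>r. r * (bump_deriv \<rho> r)^2 + bump_sq_div \<rho> r)"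
    using assms(1)
    by (intro set_integral_Ioo_eq_integral continuous_intros)
  also have "\<dots> = 1/105 + 1/280"
    by (intro integral_unique has_integral_add has_integral_bump_deriv_sq has_integral_bump_sq_div assms)
  finally show ?thesis .
qed

definition saturation_integral :: "real \<Rightarrow> real \<Rightarrow> (real \<Rightarrow> real) \<Rightarrow> real" where
  "saturation_integral \<alpha> R u = integral {0..R} (\<lambda>r. r * (u r)^2 / (1 + \<alpha> * (u r)^2))"

lemma saturation_integral_le:
  assumes "\<alpha> > 0" "0 \<le> R" "continuous_on {0..R} u"
  shows "saturation_integral \<alpha> R u \<le> R^2 / (2 * \<alpha>)"
proof -
  have den: "0 < 1 + \<alpha> * (u r)^2" for r
    using assms(1) by (simp add: add_pos_nonneg)
  have "((\<lambda>r. r / \<alpha>) has_integral (R^2 / (2 * \<alpha>) - 0^2 / (2 * \<alpha>))) {0..R}"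
    using assms(1,2)
    by (intro fundamental_theorem_of_calculus)
       (auto intro!: derivative_eq_intros simp: has_real_derivative_iff_has_vector_derivative[symmetric])
  moreover have "(\<lambda>r. r * (u r)^2 / (1 + \<alpha> * (u r)^2)) integrable_on {0..R}"
    using assms(3) den by (intro integrable_continuous_interval continuous_intros) (auto simp: less_le)
  moreover have "r * (u r)^2 / (1 + \<alpha> * (u r)^2) \<le> r / \<alpha>" if "0 \<le> r" for r
  proof -
    have "r * (u r)^2 / (1 + \<alpha> * (u r)^2) = (r / \<alpha>) * (\<alpha> * (u r)^2 / (1 + \<alpha> * (u r)^2))"
      using assms(1) den[of r] by (simp add: field_simps)
    also have "\<dots> \<le> r / \<alpha>"
      using that assms(1) den[of r] by (intro mult_right_le_one_le) auto
    finally show ?thesis .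
  qed
  ultimately show ?thesis
    unfolding saturation_integral_def
    by (intro has_integral_le[OF integrable_integral]) auto
qed

lemma gamma_kappa_scaled_bump:
  assumes "\<alpha> > 0" "0 < \<rho>" "\<rho> \<le> R"
  shows "gamma_kappa \<kappa> \<alpha> n R (\<lambda>r. t * bump \<rho> r) (\<lambda>r. t * bump_deriv \<rho> r)
    = 1/2 * (t^2 * (1/105 + (real_of_int n)^2/280 - 2 * (1/\<alpha> - \<kappa>) * (\<rho>^2/1260))
             + 2 * (1/\<alpha>) * saturation_integral \<alpha> R (\<lambda>r. t * bump \<rho> r))"
proof -
  define S where "S r = r * (t * bump \<rho> r)^2 / (1 + \<alpha> * (t * bump \<rho> r)^2)" for r
  define L where "L r = r * (bump_deriv \<rho> r)^2 + (real_of_int n)^2 * bump_sq_div \<rho> r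
    - 2 * (1/\<alpha> - \<kappa>) * (r * (bump \<rho> r)^2)" for r
  have den: "1 + \<alpha> * (t * bump \<rho> r)^2 \<noteq> 0" for r
    using assms(1) by (simp add: add_pos_nonneg less_imp_neq[symmetric])
  have cont: "continuous_on {0..R} (\<lambda>r. t^2 * L r + 2 * (1/\<alpha>) * S r)"
    unfolding L_def S_def using assms(1,2) den by (auto intro!: continuous_intros)
  have "gamma_kappa \<kappa> \<alpha> n R (\<lambda>r. t * bump \<rho> r) (\<lambda>r. t * bump_deriv \<rho> r)
      = 1/2 * (LINT r:{0<..<R}|lborel. t^2 * L r + 2 * (1/\<alpha>) * S r)"
    unfolding gamma_kappa_def
  proof (intro arg_cong[where f="\<lambda>x. 1/2 * x"] set_lebesgue_integral_cong allI impI)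
    fix r :: real assume "r \<in> {0<..<R}"
    then have "(bump \<rho> r)^2 = r * bump_sq_div \<rho> r"
      using bump_sq_div_eq[OF assms(2), of r] by (simp add: field_simps)
    then show "r * (t * bump_deriv \<rho> r)^2 + (real_of_int n)^2 / r * (t * bump \<rho> r)^2
        - 2 * (1/\<alpha> - \<kappa>) * r * (t * bump \<rho> r)^2
        + 2 * (1/\<alpha>) * (r * (t * bump \<rho> r)^2 / (1 + \<alpha> * (t * bump \<rho> r)^2))
        = t^2 * L r + 2 * (1/\<alpha>) * S r"
      using \<open>r \<in> {0<..<R}\<close> unfolding L_def S_def by (simp add: power_mult_distrib field_simps)
  qed simp
  also have "\<dots> = 1/2 * integral {0..R} (\<lambda>r. t^2 * L r + 2 * (1/\<alpha>) * S r)"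
    using set_integral_Ioo_eq_integral[OF cont] by (simp only:)
  also have "integral {0..R} (\<lambda>r. t^2 * L r + 2 * (1/\<alpha>) * S r)
      = t^2 * (1/105 + (real_of_int n)^2 * (1/280) - 2 * (1/\<alpha> - \<kappa>) * (\<rho>^2/1260))
        + 2 * (1/\<alpha>) * integral {0..R} S"
  proof (intro integral_unique has_integral_add has_integral_mult_right)
    show "(L has_integral 1/105 + (real_of_int n)^2 * (1/280) - 2 * (1/\<alpha> - \<kappa>) * (\<rho>^2/1260)) {0..R}"
      unfolding L_def using assms(2,3)
      by (intro has_integral_diff has_integral_add has_integral_mult_right
          has_integral_bump_deriv_sq has_integral_bump_sq_div has_integral_bump_sq)
    have "continuous_on {0..R} S"
      unfolding S_def using assms(2) den by (auto intro!: continuous_intros)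
    then show "(S has_integral integral {0..R} S) {0..R}"
      by (intro integrable_integral integrable_continuous_interval)
  qed
  finally show ?thesis
    by (simp add: saturation_integral_def S_def[abs_def])
qed

lemma saturation_integral_bump_ge:
  assumes "\<alpha> > 0" "0 < \<rho>" "\<rho> \<le> R"
  shows "t^2 / (1 + \<alpha> * t^2) * (\<rho>^2/1260) \<le> saturation_integral \<alpha> R (\<lambda>r. t * bump \<rho> r)"
  unfolding saturation_integral_def
proof (rule has_integral_le)
  show "((\<lambda>r. t^2 / (1 + \<alpha> * t^2) * (r * (bump \<rho> r)^2)) has_integral
      t^2 / (1 + \<alpha> * t^2) * (\<rho>^2/1260)) {0..R}"
    by (intro has_integral_mult_right has_integral_bump_sq assms(2,3))
  have "continuous_on {0..R} (\<lambda>r. r * (t * bump \<rho> r)^2 / (1 + \<alpha> * (t * bump \<rho> r)^2))"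
    using assms(1,2) by (intro continuous_intros) (auto simp: add_pos_nonneg less_imp_neq[symmetric])
  then show "((\<lambda>r. r * (t * bump \<rho> r)^2 / (1 + \<alpha> * (t * bump \<rho> r)^2)) has_integral
      integral {0..R} (\<lambda>r. r * (t * bump \<rho> r)^2 / (1 + \<alpha> * (t * bump \<rho> r)^2))) {0..R}"
    by (intro integrable_integral integrable_continuous_interval)
next
  fix r :: real assume "r \<in> {0..R}"
  then have r: "0 \<le> r" by simp
  have u: "0 \<le> bump \<rho> r" "bump \<rho> r \<le> 1" using bump_bounds[OF assms(2) r] by auto
  then have "(t * bump \<rho> r)^2 \<le> t^2"
    by (simp add: power_mult_distrib mult_right_le_one_le power_le_one)
  then have "1 + \<alpha> * (t * bump \<rho> r)^2 \<le> 1 + \<alpha> * t^2"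
    using assms(1) by simp
  then have "r * (t * bump \<rho> r)^2 / (1 + \<alpha> * t^2) \<le> r * (t * bump \<rho> r)^2 / (1 + \<alpha> * (t * bump \<rho> r)^2)"
    using assms(1) r by (intro divide_left_mono) (auto intro!: mult_pos_pos add_pos_nonneg)
  then show "t^2 / (1 + \<alpha> * t^2) * (r * (bump \<rho> r)^2) \<le>
      r * (t * bump \<rho> r)^2 / (1 + \<alpha> * (t * bump \<rho> r)^2)"
    by (simp add: power_mult_distrib mult.commute mult.left_commute)
qed

lemma continuous_on_saturation_integral_bump:
  assumes "\<alpha> > 0" "0 < \<rho>"
  shows "continuous_on S (\<lambda>t. saturation_integral \<alpha> R (\<lambda>r. t * bump \<rho> r))"
proof -
  have "continuous_on (UNIV \<times> cbox 0 R)
      (\<lambda>(t, r). r * (t * bump \<rho> r)^2 / (1 + \<alpha> * (t * bump \<rho> r)^2))"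
    using assms by (auto intro!: continuous_intros simp: split_beta add_pos_nonneg less_imp_neq[symmetric])
  from integral_continuous_on_param[OF this] show ?thesis
    unfolding saturation_integral_def by (auto intro: continuous_on_subset)
qed

lemma ln_2_ge: "11/16 \<le> ln (2::real)"
  using ln_approx_bounds[of 2 2] by (simp add: eval_nat_numeral)

lemma bump_coefficient_lt:
  fixes m c R :: real
  assumes "0 < c" "0 < R" "sqrt (6 * (1 + m^2 * (2 * ln 2 - 1)) / c) < R"
  shows "1/105 + m^2/280 < 2 * c * (R^2/1260)"
proof -
  define X where "X = 6 * (1 + m^2 * (2 * ln 2 - 1))"
  have "m^2 * (3/8) \<le> m^2 * (2 * ln 2 - 1)"
    using ln_2_ge by (intro mult_left_mono) auto
  then have X: "6 + 9/4 * m^2 \<le> X"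
    unfolding X_def by simp
  have "X / c < R^2"
  proof (cases "X / c < 0")
    case False
    then have "sqrt (X / c)^2 < R^2"
      using assms(3) by (intro power_strict_mono) (auto simp: X_def)
    with False show ?thesis by simp
  qed (use assms(2) in \<open>simp add: order_less_le_trans\<close>)
  then have "X < c * R^2"
    using assms(1) by (simp add: divide_less_eq mult.commute)
  with X show ?thesis by simp
qed

lemma exists_bump_weight:
  fixes K c \<kappa> A :: real
  assumes "0 < K" "0 < c" "0 < c + \<kappa>" "K < 2 * c * A"
  shows "\<exists>a. 0 < a \<and> a \<le> A \<and> K < 2 * c * a \<and> 0 < K + 2 * \<kappa> * a"
proof -
  have "0 < c * A" using assms(1,4) by linarith
  with assms(2) have "0 < A" by (simp add: zero_less_mult_iff)
  show ?thesis
  proof (cases "0 < K + 2 * \<kappa> * A")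
    case True
    with \<open>0 < A\<close> assms(4) show ?thesis by blast
  next
    case False
    then have "\<kappa> * A < 0" using assms(1) by linarith
    with \<open>0 < A\<close> have "\<kappa> < 0" by (simp add: mult_less_0_iff)
    then have cm: "0 < c - \<kappa>" using assms(2) by simp
    show ?thesis
    proof (intro exI[of _ "K / (c - \<kappa>)"] conjI)
      show "0 < K / (c - \<kappa>)" using assms(1) cm by simp
      have "(- \<kappa>) * A < c * A"
        using assms(3) \<open>0 < A\<close> by (intro mult_strict_right_mono) auto
      then have "K < (c - \<kappa>) * A"
        using False by (simp add: algebra_simps)
      then show "K / (c - \<kappa>) \<le> A" using cm by (simp add: divide_le_eq mult.commute)
      have "2 * c * (K / (c - \<kappa>)) - K = K * (c + \<kappa>) / (c - \<kappa>)"
        using cm by (simp add: field_simps)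
      moreover have "0 < K * (c + \<kappa>) / (c - \<kappa>)"
        using assms(1,3) cm by simp
      ultimately show "K < 2 * c * (K / (c - \<kappa>))" by linarith
      have "K + 2 * \<kappa> * (K / (c - \<kappa>)) = K * (c + \<kappa>) / (c - \<kappa>)"
        using cm by (simp add: field_simps)
      then show "0 < K + 2 * \<kappa> * (K / (c - \<kappa>))"
        using assms(1,3) cm by simp
    qed
  qed
qed

lemma saturated_quadratic_sign_change:
  fixes N :: "real \<Rightarrow> real" and \<alpha> a E B :: real
  assumes "0 < \<alpha>" "0 < a" "E < 0" "0 < E + 2 * a / \<alpha>"
    and lower: "\<And>t. t^2 / (1 + \<alpha> * t^2) * a \<le> N t" and upper: "\<And>t. N t \<le> B"
  shows "\<exists>t\<^sub>1 t\<^sub>2. 0 < t\<^sub>1 \<and> t\<^sub>1 \<le> t\<^sub>2 \<and> 0 < t\<^sub>1^2 * E + 2 * (1/\<alpha>) * N t\<^sub>1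
    \<and> t\<^sub>2^2 * E + 2 * (1/\<alpha>) * N t\<^sub>2 < 0"
proof -
  define \<delta> where "\<delta> = E + 2 * a / \<alpha>"
  define \<tau> where "\<tau> = \<delta> / (4 * a)"
  define t\<^sub>1 where "t\<^sub>1 = sqrt \<tau>"
  have "0 < \<tau>" using assms(2,4) by (simp add: \<tau>_def \<delta>_def)
  then have "0 < t\<^sub>1" and t\<^sub>1_sq: "t\<^sub>1^2 = \<tau>" by (simp_all add: t\<^sub>1_def)
  have den: "0 < 1 + \<alpha> * \<tau>" using \<open>0 < \<tau>\<close> assms(1) by (simp add: add_pos_pos)
  have saturation: "\<tau> * (2 * a / \<alpha>) - 2 * a * \<tau>^2 / (1 + \<alpha> * \<tau>) = 2 * (1/\<alpha>) * (\<tau> / (1 + \<alpha> * \<tau>) * a)"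
    using den assms(1) by (simp add: divide_simps power2_eq_square) (simp add: algebra_simps)
  have "0 < \<tau> * \<delta> / 2"
    using \<open>0 < \<tau>\<close> assms(4) by (simp add: \<delta>_def)
  also have "\<tau> * \<delta> / 2 = \<tau> * \<delta> - 2 * a * \<tau>^2"
    using assms(2) by (simp add: \<tau>_def field_simps power2_eq_square)
  also have "\<dots> \<le> \<tau> * \<delta> - 2 * a * \<tau>^2 / (1 + \<alpha> * \<tau>)"
    using den assms(1,2) \<open>0 < \<tau>\<close> by (simp add: divide_le_eq)
  also have "\<dots> = \<tau> * E + 2 * (1/\<alpha>) * (\<tau> / (1 + \<alpha> * \<tau>) * a)"
    using saturation unfolding \<delta>_def distrib_left by linarith
  also have "\<dots> \<le> t\<^sub>1^2 * E + 2 * (1/\<alpha>) * N t\<^sub>1"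
    unfolding t\<^sub>1_sq using lower[of t\<^sub>1] assms(1) by (intro add_left_mono mult_left_mono) (auto simp: t\<^sub>1_sq)
  finally have pos: "0 < t\<^sub>1^2 * E + 2 * (1/\<alpha>) * N t\<^sub>1" .
  define Y where "Y = 2 * B / (\<alpha> * (- E))"
  define t\<^sub>2 where "t\<^sub>2 = t\<^sub>1 + sqrt Y + 1"
  have "0 \<le> B" using lower[of 0] upper[of 0] by simp
  then have "0 \<le> Y" unfolding Y_def using assms(1,3) by (intro divide_nonneg_pos) (auto simp: mult_pos_neg)
  then have "t\<^sub>1 \<le> t\<^sub>2" by (simp add: t\<^sub>2_def)
  have "sqrt Y ^ 2 < t\<^sub>2 ^ 2"
    using \<open>0 \<le> Y\<close> \<open>0 < t\<^sub>1\<close> by (intro power_strict_mono) (auto simp: t\<^sub>2_def)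
  then have "Y * (- E) < t\<^sub>2^2 * (- E)"
    using \<open>0 \<le> Y\<close> assms(3) by (intro mult_strict_right_mono) auto
  moreover have "Y * (- E) = 2 * (1/\<alpha>) * B"
    using assms(1,3) by (simp add: Y_def)
  moreover have "2 * (1/\<alpha>) * N t\<^sub>2 \<le> 2 * (1/\<alpha>) * B"
    using upper[of t\<^sub>2] assms(1) by (intro mult_left_mono) auto
  ultimately have "t\<^sub>2^2 * E + 2 * (1/\<alpha>) * N t\<^sub>2 < 0" by simp
  with pos \<open>0 < t\<^sub>1\<close> \<open>t\<^sub>1 \<le> t\<^sub>2\<close> show ?thesis by blast
qed

lemma nehari_nonempty_of_bump_radius:
  fixes n :: int and \<alpha> \<kappa> \<rho> R :: real
  defines "K \<equiv> 1/105 + (real_of_int n)^2/280" and "a \<equiv> \<rho>^2/1260"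
  assumes "\<alpha> > 0" "0 < \<rho>" "\<rho> \<le> R"
    and "K < 2 * (1/\<alpha> - \<kappa>) * a" "0 < K + 2 * \<kappa> * a"
  shows "nehari \<kappa> \<alpha> n R \<noteq> {}"
proof -
  let ?\<gamma> = "\<lambda>t. gamma_kappa \<kappa> \<alpha> n R (\<lambda>r. t * bump \<rho> r) (\<lambda>r. t * bump_deriv \<rho> r)"
  let ?N = "\<lambda>t. saturation_integral \<alpha> R (\<lambda>r. t * bump \<rho> r)"
  define E where "E = K - 2 * (1/\<alpha> - \<kappa>) * a"
  have \<gamma>: "?\<gamma> t = 1/2 * (t^2 * E + 2 * (1/\<alpha>) * ?N t)" for t
    using gamma_kappa_scaled_bump[OF assms(3-5)] by (simp add: E_def K_def a_def)
  have lower: "\<And>t. t^2 / (1 + \<alpha> * t^2) * a \<le> ?N t"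
    using saturation_integral_bump_ge[OF assms(3-5)] by (simp add: a_def)
  have upper: "\<And>t. ?N t \<le> R^2 / (2 * \<alpha>)"
    using assms(3-5) by (intro saturation_integral_le continuous_intros) auto
  have "E < 0" "0 < E + 2 * a / \<alpha>" "0 < a"
    using assms(4,6,7) by (auto simp: E_def a_def algebra_simps)
  from saturated_quadratic_sign_change[OF assms(3) \<open>0 < a\<close> \<open>E < 0\<close> \<open>0 < E + 2 * a / \<alpha>\<close> lower upper]
  obtain t\<^sub>1 t\<^sub>2 where "0 < t\<^sub>1" "t\<^sub>1 \<le> t\<^sub>2" "0 < ?\<gamma> t\<^sub>1" "?\<gamma> t\<^sub>2 < 0"
    unfolding \<gamma> by auto
  moreover have "continuous_on {t\<^sub>1..t\<^sub>2} ?\<gamma>"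
    unfolding \<gamma> using assms(3,4) by (intro continuous_intros continuous_on_saturation_integral_bump)
  moreover have "Hnorm2 R (bump \<rho>) (bump_deriv \<rho>) \<noteq> 0"
    using Hnorm2_bump[OF assms(4,5)] by simp
  ultimately show ?thesis
    using nehari_nonempty_of_sign_change[OF C1_0_bump set_integrable_bump_sq_div] assms(4,5) by blast
qed

theorem lemma4p2:
  fixes n :: int and \<alpha> R \<kappa> :: real
  assumes "\<bar>n\<bar> \<ge> 1" and "\<alpha> > 0" and "R > 0"
    and "\<kappa> < 1/\<alpha> - (bessel_r0^2 + (real_of_int n)^2) / (2 * R^2)"
    and "sqrt (6 * (1 + (real_of_int n)^2 * (2 * ln 2 - 1)) / (1/\<alpha> - \<kappa>)) < R"
  shows "nehari \<kappa> \<alpha> n R \<noteq> {}"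
proof -
  define c where "c = 1/\<alpha> - \<kappa>"
  define K where "K = 1/105 + (real_of_int n)^2/280"
  have "0 \<le> (bessel_r0^2 + (real_of_int n)^2) / (2 * R^2)" by simp
  then have "0 < c" using assms(4) unfolding c_def by linarith
  have "K < 2 * c * (R^2/1260)"
    unfolding K_def by (rule bump_coefficient_lt[OF \<open>0 < c\<close> assms(3) assms(5)[folded c_def]])
  moreover have "0 < K" "0 < c + \<kappa>" using assms(2) by (simp_all add: K_def c_def add_pos_nonneg)
  ultimately obtain a where a: "0 < a" "a \<le> R^2/1260" "K < 2 * c * a" "0 < K + 2 * \<kappa> * a"
    using exists_bump_weight[of K c \<kappa> "R^2/1260"] \<open>0 < c\<close> by blast
  define \<rho> where "\<rho> = sqrt (1260 * a)"
  have "0 < \<rho>" "\<rho>^2/1260 = a" using a(1) by (simp_all add: \<rho>_def)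
  moreover have "\<rho> \<le> sqrt (R^2)"
    unfolding \<rho>_def using a(2) by (intro real_sqrt_le_mono) simp
  ultimately show ?thesis
    using nehari_nonempty_of_bump_radius[OF assms(2), of \<rho> R n \<kappa>] a(3,4) assms(3)
    by (simp add: K_def c_def)
qed

end
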